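(* Consider the Hamiltonian $H:\mathbb{R}^4\to\mathbb{R}$, with coordinates $(\boldsymbol{y},\boldsymbol{p})=(y_1,y_2,p_1,p_2)$, given by \[ H(\boldsymbol{y},\boldsymbol{p})= p_{1}\,y_{2} -\frac{p_{2}\left(\frac{\sin(y_{1})}{3}+\frac{y_{2}^2\,\sin(2y_{1})}{2}\right)}{\sin^2(y_{1})+\frac{1}{3}} -\frac{p_{2}^2\,\cos^2(y_{1})}{18\left(\sin^2(y_{1})+\frac{1}{3}\right)^2}, \] and the associated Hamiltonian system \[ \frac{d\boldsymbol{y}}{dt}=\frac{\partial H}{\partial \boldsymbol{p}},\qquad \frac{d\boldsymbol{p}}{dt}=-\frac{\partial H}{\partial\boldsymbol{y}}. \] Then the equilibrium $(\boldsymbol{y},\boldsymbol{p})=(0,0,0,0)$ of this system is unstable (in the sense of Lyapunov).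
   Context: This Hamiltonian is the (parameter-normalized) Hamiltonian of the Hamilton–Jacobi equation for the infinite-horizon optimal control problem of minimizing $\int_0^\infty u(t)^2\,dt$ for a pendulum swing-up, written in coordinates centered at the pending (downward) equilibrium. The origin is an equilibrium of the Hamiltonian system; the linearization there has Hamiltonian matrix $\begin{bmatrix}0&1&0&0\\-1&0&0&-1\\0&0&0&1\\0&0&-1&0\end{bmatrix}$ with eigenvalues $\pm j,\pm j$ (each of multiplicity two). Instability means: there exists a neighborhood $U$ of the origin such that for every neighborhood $W$ of the origin there is an initial condition in $W$ whose trajectory leaves $U$. *)

theory Defs
  imports "HOL-Analysis.Analysis"
begin

definition H :: "real \<Rightarrow> real \<Rightarrow> real \<Rightarrow> real \<Rightarrow> real" where
  "H y1 y2 p1 p2 =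
     p1 * y2
     - p2 * (sin y1 / 3 + y2 ^ 2 * sin (2 * y1) / 2) / ((sin y1)\<^sup>2 + 1 / 3)
     - p2 ^ 2 * (cos y1)\<^sup>2 / (18 * ((sin y1)\<^sup>2 + 1 / 3) ^ 2)"

definition dH_dy1 :: "real \<Rightarrow> real \<Rightarrow> real \<Rightarrow> real \<Rightarrow> real" where
  "dH_dy1 y1 y2 p1 p2 = deriv (\<lambda>s. H s y2 p1 p2) y1"
definition dH_dy2 :: "real \<Rightarrow> real \<Rightarrow> real \<Rightarrow> real \<Rightarrow> real" where
  "dH_dy2 y1 y2 p1 p2 = deriv (\<lambda>s. H y1 s p1 p2) y2"
definition dH_dp1 :: "real \<Rightarrow> real \<Rightarrow> real \<Rightarrow> real \<Rightarrow> real" where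
  "dH_dp1 y1 y2 p1 p2 = deriv (\<lambda>s. H y1 y2 s p2) p1"
definition dH_dp2 :: "real \<Rightarrow> real \<Rightarrow> real \<Rightarrow> real \<Rightarrow> real" where
  "dH_dp2 y1 y2 p1 p2 = deriv (\<lambda>s. H y1 y2 p1 s) p2"

definition ham_field :: "real \<times> real \<times> real \<times> real \<Rightarrow> real \<times> real \<times> real \<times> real" where
  "ham_field z = (case z of (y1, y2, p1, p2) \<Rightarrow>
     (dH_dp1 y1 y2 p1 p2, dH_dp2 y1 y2 p1 p2, - dH_dy1 y1 y2 p1 p2, - dH_dy2 y1 y2 p1 p2))"

definition ham_solution :: "(real \<Rightarrow> real \<times> real \<times> real \<times> real) \<Rightarrow> real \<Rightarrow> bool" where
  "ham_solution x T \<longleftrightarrow>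
     (\<forall>t\<in>{0..T}. (x has_vector_derivative ham_field (x t)) (at t within {0..T}))"

end

theory Submission
  imports Defs
begin

(* The Hamiltonian is conserved along solutions, and the points (-d, 0, d, 0) lie on the
   level set H = 0 for every d.  On that level set and inside the cube
   |y1|, |y2|, |p1|, |p2| <= 1/10, the Chetaev function

     Z = - (2 tan (y1/2) p1 + (1 - 2 cos y1 (1 - cos y1) / (sin^2 y1 + 1/3)) y2 p2) - p1 p2 / 2

   satisfies dZ/dt >= 3 Z^2 and |Z| <= 1/25, while Z(-d, 0, d, 0) > 0.  Hence Z grows at least
   linearly, and a solution starting at (-d, 0, d, 0) must leave the cube within time 1 / Z(0)^2.
   Solutions are constructed by Picard iteration for the field composed with the coordinatewise
   retraction onto the cube, which is globally Lipschitz and agrees with the true field up to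
   the first exit time. *)

section \<open>Global solutions by Picard iteration\<close>

lemma has_integral_power_Icc_0:
  assumes "0 \<le> t"
  shows "((\<lambda>s. s ^ n) has_integral t ^ Suc n / Suc n) {0..t}"
proof -
  have "((\<lambda>s. s ^ n) has_integral t ^ Suc n / Suc n - 0 ^ Suc n / Suc n) {0..t}"
  proof (rule fundamental_theorem_of_calculus[OF assms])
    fix s :: real
    have "((\<lambda>s. s ^ Suc n / Suc n) has_real_derivative Suc n * s ^ n / Suc n) (at s)"
      using DERIV_pow[of "Suc n" s] by (intro DERIV_cdivide) simp
    then have "((\<lambda>s. s ^ Suc n / Suc n) has_real_derivative s ^ n) (at s)"
      by (simp del: of_nat_Suc)
    then show "((\<lambda>s. s ^ Suc n / Suc n) has_vector_derivative s ^ n) (at s within {0..t})"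
      by (simp add: has_real_derivative_iff_has_vector_derivative[symmetric] has_field_derivative_at_within)
  qed
  then show ?thesis by simp
qed

fun picard_iterate :: "('a::banach \<Rightarrow> 'a) \<Rightarrow> 'a \<Rightarrow> nat \<Rightarrow> real \<Rightarrow> 'a" where
  "picard_iterate G z0 0 = (\<lambda>t. z0)"
| "picard_iterate G z0 (Suc n) = (\<lambda>t. z0 + integral {0..t} (\<lambda>s. G (picard_iterate G z0 n s)))"

context
  fixes G :: "'a::banach \<Rightarrow> 'a" and L :: real
  assumes lipschitz: "L-lipschitz_on UNIV G"
begin

private lemma lipschitz_norm: "norm (G z - G w) \<le> L * norm (z - w)"
  using lipschitz_onD[OF lipschitz] by (simp add: dist_norm)

lemma picard_iterate_continuous_on: "continuous_on {0..T} (picard_iterate G z0 n)"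
proof (induction n arbitrary: T)
  case (Suc n)
  have "continuous_on {0..T} (\<lambda>s. G (picard_iterate G z0 n s))"
    using Suc lipschitz_on_continuous_on[OF lipschitz] continuous_on_compose2 by blast
  then show ?case
    by (auto intro!: continuous_intros indefinite_integral_continuous_1 integrable_continuous_real)
qed simp

lemma picard_iterate_integrable: "(\<lambda>s. G (picard_iterate G z0 n s)) integrable_on {0..t}"
  using picard_iterate_continuous_on lipschitz_on_continuous_on[OF lipschitz]
  by (blast intro: integrable_continuous_real continuous_on_compose2)

lemma picard_iterate_step_le:
  assumes "0 \<le> t"
  shows "norm (picard_iterate G z0 (Suc n) t - picard_iterate G z0 n t)
           \<le> norm (G z0) * L ^ n * t ^ Suc n / fact (Suc n)"
  using assms
proof (induction n arbitrary: t)
  case 0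
  then have "norm (integral {0..t} (\<lambda>s. G z0)) \<le> integral {0..t} (\<lambda>s. norm (G z0))"
    by (intro integral_norm_bound_integral) auto
  then show ?case using 0 by (simp add: mult.commute)
next
  case (Suc n)
  define P where "P = picard_iterate G z0"
  define c where "c = norm (G z0) * L ^ Suc n / fact (Suc (Suc n))"
  have L0: "L \<ge> 0" using lipschitz_on_nonneg[OF lipschitz] .
  have bound: "((\<lambda>s. c * (Suc (Suc n) * s ^ Suc n)) has_integral c * t ^ Suc (Suc n)) {0..t}"
    using has_integral_mult_right[OF has_integral_power_Icc_0[OF Suc.prems, of "Suc n"], of "c * Suc (Suc n)"]
    by (simp add: mult_ac del: of_nat_Suc)
  have "P (Suc (Suc n)) t - P (Suc n) t
      = integral {0..t} (\<lambda>s. G (P (Suc n) s)) - integral {0..t} (\<lambda>s. G (P n s))"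
    unfolding P_def by simp
  also have "\<dots> = integral {0..t} (\<lambda>s. G (P (Suc n) s) - G (P n s))"
    unfolding P_def by (rule integral_diff[symmetric]; rule picard_iterate_integrable)
  also have "norm \<dots> \<le> integral {0..t} (\<lambda>s. c * (Suc (Suc n) * s ^ Suc n))"
  proof (rule integral_norm_bound_integral)
    fix s assume s: "s \<in> {0..t}"
    have "norm (G (P (Suc n) s) - G (P n s)) \<le> L * norm (P (Suc n) s - P n s)"
      by (rule lipschitz_norm)
    also have "\<dots> \<le> L * (norm (G z0) * L ^ n * s ^ Suc n / fact (Suc n))"
      unfolding P_def using s L0 by (intro mult_left_mono Suc.IH) auto
    also have "\<dots> = c * (Suc (Suc n) * s ^ Suc n)"
      by (simp add: c_def divide_simps del: of_nat_Suc)
    finally show "norm (G (P (Suc n) s) - G (P n s)) \<le> c * (Suc (Suc n) * s ^ Suc n)" .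
  qed (auto simp only: P_def intro!: integrable_diff picard_iterate_integrable has_integral_integrable[OF bound])
  also have "\<dots> = c * t ^ Suc (Suc n)"
    using bound by (rule integral_unique)
  finally show ?case by (simp add: P_def c_def mult_ac)
qed

lemma picard_iterate_uniform_limit:
  assumes "0 \<le> T"
  obtains x where "uniform_limit {0..T} (picard_iterate G z0) x sequentially"
proof -
  define P where "P = picard_iterate G z0"
  define D where "D k t = P (Suc k) t - P k t" for k t
  have L0: "L \<ge> 0" using lipschitz_on_nonneg[OF lipschitz] .
  have bound: "norm (D k t) \<le> norm (G z0) * T * ((L * T) ^ k /\<^sub>R fact k)"
    if "t \<in> {0..T}" for k t
  proof -
    have "norm (D k t) \<le> norm (G z0) * L ^ k * t ^ Suc k / fact (Suc k)"
      using picard_iterate_step_le that by (simp add: D_def P_def)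
    also have "\<dots> \<le> norm (G z0) * L ^ k * T ^ Suc k / fact k"
      using that L0 by (intro frac_le mult_left_mono power_mono fact_mono) auto
    also have "\<dots> = norm (G z0) * T * ((L * T) ^ k /\<^sub>R fact k)"
      by (simp add: power_mult_distrib field_simps)
    finally show ?thesis .
  qed
  have "summable (\<lambda>k. norm (G z0) * T * ((L * T) ^ k /\<^sub>R fact k))"
    by (intro summable_mult summable_exp_generic)
  then have "uniformly_convergent_on {0..T} (\<lambda>n t. \<Sum>k<n. D k t)"
    by (intro Weierstrass_m_test'[OF bound])
  then obtain S where S: "uniform_limit {0..T} (\<lambda>n t. \<Sum>k<n. D k t) S sequentially"
    by (auto simp: uniformly_convergent_on_def)
  have "P = (\<lambda>n t. z0 + (\<Sum>k<n. D k t))"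
  proof (intro ext)
    show "P n t = z0 + (\<Sum>k<n. D k t)" for n t
      by (induction n) (auto simp: D_def P_def)
  qed
  moreover have "uniform_limit {0..T} (\<lambda>n t. z0 + (\<Sum>k<n. D k t)) (\<lambda>t. z0 + S t) sequentially"
    by (intro uniform_limit_intros S)
  ultimately have "uniform_limit {0..T} P (\<lambda>t. z0 + S t) sequentially"
    by simp
  then show ?thesis using that by (simp add: P_def)
qed

lemma picard_limit_integral_eq:
  assumes lim: "uniform_limit {0..T} (picard_iterate G z0) x sequentially" and t: "t \<in> {0..T}"
  shows "x t = z0 + integral {0..t} (\<lambda>s. G (x s))"
proof -
  have ul: "uniform_limit {0..t} (\<lambda>n s. G (picard_iterate G z0 n s)) (G \<circ> x) sequentially"
    using t uniform_limit_compose[OF uniform_limit_on_subset[OF lim]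
        lipschitz_on_uniformly_continuous[OF lipschitz]] by auto
  have cont: "continuous_on {0..t} (\<lambda>s. G (picard_iterate G z0 n s))" for n
    using picard_iterate_continuous_on lipschitz_on_continuous_on[OF lipschitz]
    by (blast intro: continuous_on_compose2)
  obtain I J where I: "\<And>n. ((\<lambda>s. G (picard_iterate G z0 n s)) has_integral I n) {0..t}"
    and J: "((G \<circ> x) has_integral J) {0..t}" and IJ: "I \<longlonglongrightarrow> J"
    using uniform_limit_integral[OF ul cont] by auto
  have "picard_iterate G z0 (Suc n) t = z0 + I n" for n
    using I[of n] by (simp add: integral_unique)
  with IJ have "(\<lambda>n. picard_iterate G z0 (Suc n) t) \<longlonglongrightarrow> z0 + J"
    by (simp add: tendsto_add)
  moreover have "(\<lambda>n. picard_iterate G z0 (Suc n) t) \<longlonglongrightarrow> x t"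
    using LIMSEQ_Suc[OF tendsto_uniform_limitI[OF lim t]] .
  ultimately have "x t = z0 + J"
    using LIMSEQ_unique by blast
  with J show ?thesis
    by (simp add: integral_unique comp_def)
qed

theorem lipschitz_ode_solution_exists:
  assumes "0 \<le> T"
  obtains x where "x 0 = z0"
    and "\<And>t. t \<in> {0..T} \<Longrightarrow> (x has_vector_derivative G (x t)) (at t within {0..T})"
proof -
  obtain x where lim: "uniform_limit {0..T} (picard_iterate G z0) x sequentially"
    using picard_iterate_uniform_limit[OF assms] .
  have "continuous_on {0..T} x"
    by (rule uniform_limit_theorem[OF _ lim]) (auto intro: picard_iterate_continuous_on always_eventually)
  then have Gx: "continuous_on {0..T} (\<lambda>s. G (x s))"
    using lipschitz_on_continuous_on[OF lipschitz] by (blast intro: continuous_on_compose2)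
  show ?thesis
  proof
    show "x 0 = z0"
      using picard_limit_integral_eq[OF lim, of 0] assms by simp
    fix t assume t: "t \<in> {0..T}"
    have "((\<lambda>u. z0 + integral {0..u} (\<lambda>s. G (x s))) has_vector_derivative G (x t)) (at t within {0..T})"
      using integral_has_vector_derivative[OF Gx t] by (intro derivative_eq_intros) auto
    then show "(x has_vector_derivative G (x t)) (at t within {0..T})"
      by (rule has_vector_derivative_transform[rotated -1]) (use t picard_limit_integral_eq[OF lim] in auto)
  qed
qed

end

section \<open>Bounded Lipschitz functions\<close>

definition bounded_lipschitz :: "('a::metric_space \<Rightarrow> real) \<Rightarrow> bool" where
  "bounded_lipschitz f \<longleftrightarrow> (\<exists>L. L-lipschitz_on UNIV f) \<and> (\<exists>B. \<forall>z. \<bar>f z\<bar> \<le> B)"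

lemma bounded_lipschitz_const: "bounded_lipschitz (\<lambda>z. c)"
  unfolding bounded_lipschitz_def by (blast intro: lipschitz_on_constant)

lemma bounded_lipschitz_add:
  assumes "bounded_lipschitz f" "bounded_lipschitz g"
  shows "bounded_lipschitz (\<lambda>z. f z + g z)"
proof -
  obtain Lf Bf Lg Bg where "Lf-lipschitz_on UNIV f" "Lg-lipschitz_on UNIV g"
    and "\<And>z. \<bar>f z\<bar> \<le> Bf" "\<And>z. \<bar>g z\<bar> \<le> Bg"
    using assms unfolding bounded_lipschitz_def by blast
  then show ?thesis
    unfolding bounded_lipschitz_def
    by (intro conjI exI[of _ "Lf + Lg"] exI[of _ "Bf + Bg"] allI lipschitz_on_add)
      (auto intro: abs_triangle_ineq[THEN order_trans] add_mono)
qed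

lemma bounded_lipschitz_minus: "bounded_lipschitz f \<Longrightarrow> bounded_lipschitz (\<lambda>z. - f z)"
  unfolding bounded_lipschitz_def by (auto intro: lipschitz_on_minus)

lemma bounded_lipschitz_diff:
  "bounded_lipschitz f \<Longrightarrow> bounded_lipschitz g \<Longrightarrow> bounded_lipschitz (\<lambda>z. f z - g z)"
  using bounded_lipschitz_add[OF _ bounded_lipschitz_minus[of g]] by simp

lemma bounded_lipschitz_mult:
  assumes "bounded_lipschitz f" "bounded_lipschitz g"
  shows "bounded_lipschitz (\<lambda>z. f z * g z)"
proof -
  obtain Lf Bf Lg Bg where f: "Lf-lipschitz_on UNIV f" "\<And>z. \<bar>f z\<bar> \<le> Bf"
    and g: "Lg-lipschitz_on UNIV g" "\<And>z. \<bar>g z\<bar> \<le> Bg"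
    using assms unfolding bounded_lipschitz_def by blast
  have Bf: "0 \<le> Bf" and Bg: "0 \<le> Bg"
    using order_trans[OF abs_ge_zero f(2)] order_trans[OF abs_ge_zero g(2)] by auto
  have "(Bf * Lg + Lf * Bg)-lipschitz_on UNIV (\<lambda>z. f z * g z)"
  proof (rule lipschitz_onI)
    fix z w :: 'a
    have "\<bar>f z * g z - f w * g w\<bar> = \<bar>f z * (g z - g w) + (f z - f w) * g w\<bar>"
      by (simp add: algebra_simps)
    also have "\<dots> \<le> \<bar>f z\<bar> * \<bar>g z - g w\<bar> + \<bar>f z - f w\<bar> * \<bar>g w\<bar>"
      by (simp add: abs_mult[symmetric] abs_triangle_ineq)
    also have "\<dots> \<le> Bf * (Lg * dist z w) + (Lf * dist z w) * Bg"
      using lipschitz_onD[OF f(1)] lipschitz_onD[OF g(1)] f(2) g(2) Bf Bg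
        lipschitz_on_nonneg[OF f(1)]
      by (intro add_mono mult_mono) (auto simp: dist_real_def)
    finally show "dist (f z * g z) (f w * g w) \<le> (Bf * Lg + Lf * Bg) * dist z w"
      by (simp add: dist_real_def algebra_simps)
  qed (use Bf Bg lipschitz_on_nonneg[OF f(1)] lipschitz_on_nonneg[OF g(1)] in simp)
  moreover have "\<bar>f z * g z\<bar> \<le> Bf * Bg" for z
    using f(2) g(2) by (simp add: abs_mult mult_mono')
  ultimately show ?thesis
    unfolding bounded_lipschitz_def by blast
qed

lemma bounded_lipschitz_power: "bounded_lipschitz f \<Longrightarrow> bounded_lipschitz (\<lambda>z. f z ^ n)"
  by (induction n) (auto intro: bounded_lipschitz_const bounded_lipschitz_mult)

lemma bounded_lipschitz_compose:
  assumes "bounded_lipschitz f" "K-lipschitz_on UNIV h" "\<And>a. \<bar>h a\<bar> \<le> B"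
  shows "bounded_lipschitz (\<lambda>z. h (f z))"
proof -
  obtain L where "L-lipschitz_on UNIV f"
    using assms(1) unfolding bounded_lipschitz_def by blast
  then have "(K * L)-lipschitz_on UNIV (h \<circ> f)"
    by (rule lipschitz_on_compose[OF _ lipschitz_on_subset[OF assms(2)]]) simp
  then show ?thesis
    using assms(3) unfolding bounded_lipschitz_def comp_def by blast
qed

lemma bounded_lipschitz_inverse:
  assumes "bounded_lipschitz f" "0 < m" "\<And>z. m \<le> f z"
  shows "bounded_lipschitz (\<lambda>z. inverse (f z))"
proof -
  obtain L where L: "L-lipschitz_on UNIV f"
    using assms(1) unfolding bounded_lipschitz_def by blast
  have pos: "0 < f z" for z
    using assms(2,3) less_le_trans by blast
  have "(L / m^2)-lipschitz_on UNIV (\<lambda>z. inverse (f z))"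
  proof (rule lipschitz_onI)
    fix z w :: 'a
    have "dist (inverse (f z)) (inverse (f w)) = \<bar>f w - f z\<bar> / (f z * f w)"
      using pos[of z] pos[of w] by (simp add: dist_real_def field_simps abs_div)
    also have "\<dots> \<le> \<bar>f w - f z\<bar> / (m * m)"
      using pos assms(2,3) by (intro divide_left_mono mult_mono) (auto intro: less_imp_le)
    also have "\<dots> \<le> L * dist z w / (m * m)"
      using lipschitz_onD[OF L, of w z] by (intro divide_right_mono) (auto simp: dist_real_def dist_commute)
    finally show "dist (inverse (f z)) (inverse (f w)) \<le> L / m^2 * dist z w"
      by (simp add: power2_eq_square)
  qed (use lipschitz_on_nonneg[OF L] in simp)
  moreover have "\<bar>inverse (f z)\<bar> \<le> inverse m" for z
    using pos[of z] assms(2,3) by (simp add: le_imp_inverse_le)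
  ultimately show ?thesis
    unfolding bounded_lipschitz_def by blast
qed

lemma abs_sin_diff_le: "\<bar>sin a - sin b\<bar> \<le> \<bar>a - b\<bar>" for a b :: real
proof -
  have "\<bar>sin a - sin b\<bar> = 2 * \<bar>sin ((a - b) / 2)\<bar> * \<bar>cos ((a + b) / 2)\<bar>"
    by (simp add: sin_diff_sin abs_mult)
  also have "\<dots> \<le> 2 * \<bar>(a - b) / 2\<bar> * 1"
    by (intro mult_mono mult_left_mono abs_sin_x_le_abs_x abs_cos_le_one) auto
  finally show ?thesis by simp
qed

lemma abs_cos_diff_le: "\<bar>cos a - cos b\<bar> \<le> \<bar>a - b\<bar>" for a b :: real
proof -
  have "\<bar>cos a - cos b\<bar> = 2 * \<bar>sin ((a + b) / 2)\<bar> * \<bar>sin ((b - a) / 2)\<bar>"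
    by (simp add: cos_diff_cos abs_mult)
  also have "\<dots> \<le> 2 * 1 * \<bar>(b - a) / 2\<bar>"
    by (intro mult_mono mult_left_mono abs_sin_x_le_abs_x abs_sin_le_one) auto
  finally show ?thesis by simp
qed

lemma bounded_lipschitz_sin: "bounded_lipschitz f \<Longrightarrow> bounded_lipschitz (\<lambda>z. sin (f z))"
  by (rule bounded_lipschitz_compose[of _ 1 _ 1])
    (auto intro: lipschitz_onI simp: dist_real_def abs_sin_diff_le)

lemma bounded_lipschitz_cos: "bounded_lipschitz f \<Longrightarrow> bounded_lipschitz (\<lambda>z. cos (f z))"
  by (rule bounded_lipschitz_compose[of _ 1 _ 1])
    (auto intro: lipschitz_onI simp: dist_real_def abs_cos_diff_le)

definition clamp :: "real \<Rightarrow> real \<Rightarrow> real" where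
  "clamp r a = max (- r) (min r a)"

lemma clamp_eq: "\<bar>a\<bar> \<le> r \<Longrightarrow> clamp r a = a"
  unfolding clamp_def by simp

lemma bounded_lipschitz_clamp:
  assumes "1-lipschitz_on UNIV f"
  shows "bounded_lipschitz (\<lambda>z. clamp r (f z))"
proof -
  have "1-lipschitz_on UNIV (clamp r)"
    by (rule lipschitz_onI) (auto simp: clamp_def dist_real_def)
  then have "(1 * 1)-lipschitz_on UNIV (clamp r \<circ> f)"
    by (rule lipschitz_on_compose[OF assms lipschitz_on_subset]) simp
  moreover have "\<bar>clamp r a\<bar> \<le> \<bar>r\<bar>" for a
    by (auto simp: clamp_def)
  ultimately show ?thesis
    unfolding bounded_lipschitz_def comp_def by blast
qed

section \<open>The Hamiltonian vector field\<close>

type_synonym state = "real \<times> real \<times> real \<times> real"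

definition den :: "real \<Rightarrow> real" where
  "den y1 = (sin y1)\<^sup>2 + 1/3"

definition H_y1 :: "real \<Rightarrow> real \<Rightarrow> real \<Rightarrow> real" where
  "H_y1 y1 y2 p2 =
     - p2 * ((cos y1 / 3 + y2\<^sup>2 * ((cos y1)\<^sup>2 - (sin y1)\<^sup>2)) * den y1
             - 2 * sin y1 * cos y1 * (sin y1 / 3 + y2\<^sup>2 * sin y1 * cos y1)) / (den y1)\<^sup>2
     + p2\<^sup>2 * 2 * sin y1 * cos y1 * (den y1 + 2 * (cos y1)\<^sup>2) / (18 * den y1 ^ 3)"

definition H_y2 :: "real \<Rightarrow> real \<Rightarrow> real \<Rightarrow> real \<Rightarrow> real" where
  "H_y2 y1 y2 p1 p2 = p1 - p2 * 2 * y2 * sin y1 * cos y1 / den y1"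

definition H_p2 :: "real \<Rightarrow> real \<Rightarrow> real \<Rightarrow> real" where
  "H_p2 y1 y2 p2 =
     - (sin y1 / 3 + y2\<^sup>2 * sin y1 * cos y1) / den y1 - p2 * (cos y1)\<^sup>2 / (9 * (den y1)\<^sup>2)"

lemma den_ge: "den y \<ge> 1/3"
  by (simp add: den_def)

lemma den_nonzero [simp]: "den y \<noteq> 0"
  using den_ge[of y] by linarith

lemma has_real_derivative_den: "(den has_real_derivative 2 * sin y * cos y) (at y)"
  unfolding den_def[abs_def] by (auto intro!: derivative_eq_intros)

lemma H_eq:
  "H y1 y2 p1 p2 = p1 * y2 - p2 * (sin y1 / 3 + y2\<^sup>2 * sin y1 * cos y1) / den y1
     - p2\<^sup>2 * (cos y1)\<^sup>2 / (18 * (den y1)\<^sup>2)"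
  by (simp add: H_def den_def sin_double)

lemma dH_dp1_eq: "dH_dp1 y1 y2 p1 p2 = y2"
  unfolding dH_dp1_def H_eq by (rule DERIV_imp_deriv) (auto intro!: derivative_eq_intros)

lemma dH_dp2_eq: "dH_dp2 y1 y2 p1 p2 = H_p2 y1 y2 p2"
  unfolding dH_dp2_def H_eq
  by (rule DERIV_imp_deriv, (rule derivative_eq_intros refl | simp)+)
    (simp add: H_p2_def field_simps eval_nat_numeral)

lemma dH_dy2_eq: "dH_dy2 y1 y2 p1 p2 = H_y2 y1 y2 p1 p2"
  unfolding dH_dy2_def H_eq
  by (rule DERIV_imp_deriv, (rule derivative_eq_intros refl | simp)+)
    (simp add: H_y2_def field_simps power2_eq_square)

lemma dH_dy1_eq: "dH_dy1 y1 y2 p1 p2 = H_y1 y1 y2 p2"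
  unfolding dH_dy1_def H_eq
  by (rule DERIV_imp_deriv, (rule derivative_eq_intros has_real_derivative_den refl | simp)+)
    (simp add: H_y1_def field_simps eval_nat_numeral)

lemma ham_field_eq:
  "ham_field (y1, y2, p1, p2) = (y2, H_p2 y1 y2 p2, - H_y1 y1 y2 p2, - H_y2 y1 y2 p1 p2)"
  by (simp add: ham_field_def dH_dp1_eq dH_dp2_eq dH_dy1_eq dH_dy2_eq)

definition cube :: "real \<Rightarrow> state set" where
  "cube r = {z. \<bar>fst z\<bar> \<le> r \<and> \<bar>fst (snd z)\<bar> \<le> r
                \<and> \<bar>fst (snd (snd z))\<bar> \<le> r \<and> \<bar>snd (snd (snd z))\<bar> \<le> r}"

definition open_cube :: "real \<Rightarrow> state set" where
  "open_cube r = {z. \<bar>fst z\<bar> < r \<and> \<bar>fst (snd z)\<bar> < r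
                     \<and> \<bar>fst (snd (snd z))\<bar> < r \<and> \<bar>snd (snd (snd z))\<bar> < r}"

definition cube_retract :: "real \<Rightarrow> state \<Rightarrow> state" where
  "cube_retract r z =
     (clamp r (fst z), clamp r (fst (snd z)), clamp r (fst (snd (snd z))), clamp r (snd (snd (snd z))))"

lemma open_open_cube: "open (open_cube r)"
  unfolding open_cube_def by (intro open_Collect_conj open_Collect_less continuous_intros)

lemma closed_cube: "closed (cube r)"
  unfolding cube_def by (intro closed_Collect_conj closed_Collect_le continuous_intros)

lemma open_cube_subset_cube: "open_cube r \<subseteq> cube r"
  unfolding open_cube_def cube_def by auto

lemma cube_retract_id: "z \<in> cube r \<Longrightarrow> cube_retract r z = z"
  unfolding cube_def cube_retract_def by (simp add: clamp_eq)

lemma bounded_lipschitz_den: "bounded_lipschitz f \<Longrightarrow> bounded_lipschitz (\<lambda>z. den (f z))"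
  unfolding den_def
  by (intro bounded_lipschitz_add bounded_lipschitz_power bounded_lipschitz_sin bounded_lipschitz_const)

lemma bounded_lipschitz_inverse_den:
  "bounded_lipschitz f \<Longrightarrow> bounded_lipschitz (\<lambda>z. inverse (den (f z)))"
proof (rule bounded_lipschitz_inverse[where m = "1/3"])
  show "1/3 \<le> den (f z)" for z
    by (rule den_ge)
qed (simp_all add: bounded_lipschitz_den)

lemma lipschitz_ham_field_cube_retract: "\<exists>L. L-lipschitz_on UNIV (\<lambda>z. ham_field (cube_retract r z))"
proof -
  have coord: "1-lipschitz_on UNIV fst" "1-lipschitz_on UNIV (\<lambda>z. fst (snd z))"
    "1-lipschitz_on UNIV (\<lambda>z. fst (snd (snd z)))" "1-lipschitz_on UNIV (\<lambda>z::state. snd (snd (snd z)))"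
    by (rule lipschitz_onI; simp add: dist_fst_le order_trans[OF dist_fst_le dist_snd_le]
        order_trans[OF dist_fst_le order_trans[OF dist_snd_le dist_snd_le]]
        order_trans[OF dist_snd_le order_trans[OF dist_snd_le dist_snd_le]])+
  define y1 y2 p1 p2 where "y1 z = clamp r (fst z)" and "y2 z = clamp r (fst (snd z))"
    and "p1 z = clamp r (fst (snd (snd z)))" and "p2 z = clamp r (snd (snd (snd z)))" for z :: state
  have coords: "bounded_lipschitz y1" "bounded_lipschitz y2" "bounded_lipschitz p1" "bounded_lipschitz p2"
    unfolding y1_def[abs_def] y2_def[abs_def] p1_def[abs_def] p2_def[abs_def]
    using coord by (auto intro: bounded_lipschitz_clamp)
  have "bounded_lipschitz (\<lambda>z. H_p2 (y1 z) (y2 z) (p2 z))"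
    "bounded_lipschitz (\<lambda>z. - H_y1 (y1 z) (y2 z) (p2 z))"
    "bounded_lipschitz (\<lambda>z. - H_y2 (y1 z) (y2 z) (p1 z) (p2 z))"
    unfolding H_p2_def H_y1_def H_y2_def divide_inverse inverse_mult_distrib power_inverse[symmetric]
    by (intro bounded_lipschitz_add bounded_lipschitz_diff bounded_lipschitz_minus
        bounded_lipschitz_mult bounded_lipschitz_power bounded_lipschitz_sin bounded_lipschitz_cos
        bounded_lipschitz_inverse_den bounded_lipschitz_den bounded_lipschitz_const coords)+
  with coords(2) obtain L1 L2 L3 L4 where
    L1: "L1-lipschitz_on UNIV y2" and L2: "L2-lipschitz_on UNIV (\<lambda>z. H_p2 (y1 z) (y2 z) (p2 z))"
    and L3: "L3-lipschitz_on UNIV (\<lambda>z. - H_y1 (y1 z) (y2 z) (p2 z))"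
    and L4: "L4-lipschitz_on UNIV (\<lambda>z. - H_y2 (y1 z) (y2 z) (p1 z) (p2 z))"
    unfolding bounded_lipschitz_def by blast
  have "\<exists>L. L-lipschitz_on UNIV (\<lambda>z. (y2 z, H_p2 (y1 z) (y2 z) (p2 z),
      - H_y1 (y1 z) (y2 z) (p2 z), - H_y2 (y1 z) (y2 z) (p1 z) (p2 z)))"
    using lipschitz_on_Pair[OF L1 lipschitz_on_Pair[OF L2 lipschitz_on_Pair[OF L3 L4]]] by blast
  then show ?thesis
    by (simp add: cube_retract_def ham_field_eq y1_def y2_def p1_def p2_def)
qed

lemma has_vector_derivative_fst:
  "(f has_vector_derivative D) F \<Longrightarrow> ((\<lambda>x. fst (f x)) has_vector_derivative fst D) F"
  unfolding has_vector_derivative_def by (drule has_derivative_fst) simp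

lemma has_vector_derivative_snd:
  "(f has_vector_derivative D) F \<Longrightarrow> ((\<lambda>x. snd (f x)) has_vector_derivative snd D) F"
  unfolding has_vector_derivative_def by (drule has_derivative_snd) simp

lemma has_real_derivative_state_components:
  fixes x :: "real \<Rightarrow> state"
  assumes "(x has_vector_derivative (a, b, c, d)) F"
  shows "((\<lambda>t. fst (x t)) has_real_derivative a) F"
    and "((\<lambda>t. fst (snd (x t))) has_real_derivative b) F"
    and "((\<lambda>t. fst (snd (snd (x t)))) has_real_derivative c) F"
    and "((\<lambda>t. snd (snd (snd (x t)))) has_real_derivative d) F"
  using has_vector_derivative_fst[OF assms] has_vector_derivative_fst[OF has_vector_derivative_snd[OF assms]]
    has_vector_derivative_fst[OF has_vector_derivative_snd[OF has_vector_derivative_snd[OF assms]]]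
    has_vector_derivative_snd[OF has_vector_derivative_snd[OF has_vector_derivative_snd[OF assms]]]
  by (simp_all add: has_real_derivative_iff_has_vector_derivative)

lemma has_real_derivative_inverse_den:
  "((\<lambda>y. inverse (den y)) has_real_derivative - 2 * sin y * cos y * (inverse (den y))\<^sup>2) (at y)"
  by (rule derivative_eq_intros has_real_derivative_den refl | simp)+
    (simp add: power2_eq_square)

definition hamiltonian :: "state \<Rightarrow> real" where
  "hamiltonian = (\<lambda>(y1, y2, p1, p2). H y1 y2 p1 p2)"

lemma ham_field_flow_components:
  fixes x :: "real \<Rightarrow> state"
  assumes "(x has_vector_derivative ham_field (x t)) (at t within S)"
  obtains y1 y2 p1 p2 where "x = (\<lambda>t. (y1 t, y2 t, p1 t, p2 t))"
    and "(y1 has_real_derivative y2 t) (at t within S)"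
    and "(y2 has_real_derivative H_p2 (y1 t) (y2 t) (p2 t)) (at t within S)"
    and "(p1 has_real_derivative - H_y1 (y1 t) (y2 t) (p2 t)) (at t within S)"
    and "(p2 has_real_derivative - H_y2 (y1 t) (y2 t) (p1 t) (p2 t)) (at t within S)"
proof -
  define y1 y2 p1 p2 where "y1 t = fst (x t)" and "y2 t = fst (snd (x t))"
    and "p1 t = fst (snd (snd (x t)))" and "p2 t = snd (snd (snd (x t)))" for t
  have x: "x = (\<lambda>t. (y1 t, y2 t, p1 t, p2 t))"
    by (simp add: y1_def y2_def p1_def p2_def)
  from has_real_derivative_state_components[OF assms[unfolded x ham_field_eq]]
  show ?thesis
    by (intro that[OF x]) simp_all
qed

lemma hamiltonian_has_derivative_zero:
  assumes "(x has_vector_derivative ham_field (x t)) (at t within S)"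
  shows "((\<lambda>t. hamiltonian (x t)) has_real_derivative 0) (at t within S)"
proof -
  obtain y1 y2 p1 p2 where x: "x = (\<lambda>t. (y1 t, y2 t, p1 t, p2 t))"
    and d: "(y1 has_real_derivative y2 t) (at t within S)"
      "(y2 has_real_derivative H_p2 (y1 t) (y2 t) (p2 t)) (at t within S)"
      "(p1 has_real_derivative - H_y1 (y1 t) (y2 t) (p2 t)) (at t within S)"
      "(p2 has_real_derivative - H_y2 (y1 t) (y2 t) (p1 t) (p2 t)) (at t within S)"
    by (rule ham_field_flow_components[OF assms])
  have dden: "((\<lambda>t. inverse (den (y1 t))) has_real_derivative
      - 2 * sin (y1 t) * cos (y1 t) * (inverse (den (y1 t)))\<^sup>2 * y2 t) (at t within S)"
    by (rule DERIV_chain2[OF has_real_derivative_inverse_den d(1)])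
  have "((\<lambda>t. H (y1 t) (y2 t) (p1 t) (p2 t)) has_real_derivative 0) (at t within S)"
    unfolding H_eq divide_inverse inverse_mult_distrib power_inverse[symmetric]
    apply (rule dden d derivative_eq_intros refl | (simp; fail))+
    unfolding H_p2_def H_y1_def H_y2_def divide_inverse inverse_mult_distrib power_inverse[symmetric]
    using right_inverse[OF den_nonzero[of "y1 t"]] by (simp; algebra)
  then show ?thesis
    by (simp add: hamiltonian_def x)
qed

section \<open>The Chetaev function\<close>

definition chetaev_a :: "real \<Rightarrow> real" where
  "chetaev_a y = 2 * sin y / (1 + cos y)"

definition chetaev_m :: "real \<Rightarrow> real" where
  "chetaev_m y = 1 - 2 * cos y * (1 - cos y) / den y"

definition chetaev :: "state \<Rightarrow> real" where
  "chetaev = (\<lambda>(y1, y2, p1, p2). - (p1 * chetaev_a y1 + p2 * y2 * chetaev_m y1) - p1 * p2 / 2)"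

definition chetaev_rate :: "state \<Rightarrow> real" where
  "chetaev_rate = (\<lambda>(y1, y2, p1, p2).
     H_y1 y1 y2 p2 * (chetaev_a y1 + p2 / 2) + H_y2 y1 y2 p1 p2 * (y2 * chetaev_m y1 + p1 / 2)
     - 2 * p1 * y2 / (1 + cos y1) - p2 * H_p2 y1 y2 p2 * chetaev_m y1
     + p2 * y2\<^sup>2 * (2 * sin y1 * (2 * cos y1 - 1) * den y1 - 4 * sin y1 * (cos y1)\<^sup>2 * (1 - cos y1))
       / (den y1)\<^sup>2)"

lemma has_real_derivative_chetaev_a:
  assumes "1 + cos y \<noteq> 0"
  shows "(chetaev_a has_real_derivative 2 / (1 + cos y)) (at y)"
proof -
  have "2 * cos y * (1 + cos y) - (- sin y) * (2 * sin y) = 2 * cos y + 2 * ((sin y)\<^sup>2 + (cos y)\<^sup>2)"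
    by algebra
  then have "2 * cos y * (1 + cos y) - (- sin y) * (2 * sin y) = 2 * (1 + cos y)"
    by simp
  then have "(2 * cos y * (1 + cos y) - (- sin y) * (2 * sin y)) / (1 + cos y) ^ Suc (Suc 0)
      = 2 / (1 + cos y)"
    using assms by (simp add: power2_eq_square divide_simps)
  moreover have "((\<lambda>y. 2 * sin y / (1 + cos y)) has_real_derivative
      (2 * cos y * (1 + cos y) - (- sin y) * (2 * sin y)) / (1 + cos y) ^ Suc (Suc 0)) (at y)"
    using assms by (intro DERIV_quotient derivative_eq_intros) auto
  ultimately show ?thesis
    by (simp add: chetaev_a_def[abs_def])
qed

lemma has_real_derivative_chetaev_m:
  "(chetaev_m has_real_derivative
     - (2 * sin y * (2 * cos y - 1) * den y - 4 * sin y * (cos y)\<^sup>2 * (1 - cos y)) / (den y)\<^sup>2) (at y)"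
  unfolding chetaev_m_def[abs_def]
  by (rule derivative_eq_intros has_real_derivative_den refl | simp)+
    (simp add: field_simps power2_eq_square)

lemma chetaev_has_derivative:
  assumes "(x has_vector_derivative ham_field (x t)) (at t within S)" and "0 < cos (fst (x t))"
  shows "((\<lambda>t. chetaev (x t)) has_real_derivative chetaev_rate (x t)) (at t within S)"
proof -
  obtain y1 y2 p1 p2 where x: "x = (\<lambda>t. (y1 t, y2 t, p1 t, p2 t))"
    and d: "(y1 has_real_derivative y2 t) (at t within S)"
      "(y2 has_real_derivative H_p2 (y1 t) (y2 t) (p2 t)) (at t within S)"
      "(p1 has_real_derivative - H_y1 (y1 t) (y2 t) (p2 t)) (at t within S)"
      "(p2 has_real_derivative - H_y2 (y1 t) (y2 t) (p1 t) (p2 t)) (at t within S)"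
    by (rule ham_field_flow_components[OF assms(1)])
  have "1 + cos (y1 t) \<noteq> 0"
    using assms(2) by (simp add: x)
  note da = DERIV_chain2[OF has_real_derivative_chetaev_a[OF this] d(1)]
  note dm = DERIV_chain2[OF has_real_derivative_chetaev_m d(1)]
  have "((\<lambda>t. chetaev (y1 t, y2 t, p1 t, p2 t)) has_real_derivative chetaev_rate (y1 t, y2 t, p1 t, p2 t))
      (at t within S)"
    unfolding chetaev_def prod.case
    apply (rule da dm d derivative_eq_intros refl | (simp; fail))+
    by (simp add: chetaev_rate_def algebra_simps; simp add: field_simps power2_eq_square)
  then show ?thesis
    by (simp add: x)
qed

section \<open>Estimates near the equilibrium\<close>

(* In the variables s, c, M, u, v, w, standing for sin y1, cos y1, den y1 and the inverses of
   den y1, 1 + cos y1 and cos y1, the left-hand side is chetaev_rate, and the right-hand side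
   splits it into (chetaev_m y1 - 2 / (1 + cos y1)) * H plus a quadratic form in p1, p2; on the
   level set H = 0 only the quadratic form remains.  The difference of the two sides is
   p2 * E2 + p2 * y2^2 * E3 + p2^2 * E4, where each E_i vanishes by the side relations. *)
lemma chetaev_identity_poly:
  fixes s c M u v w y2 p1 p2 :: real
  assumes sc: "s\<^sup>2 + c\<^sup>2 = 1" and M: "3 * M = 3 * s\<^sup>2 + 1"
    and u: "u * M = 1" and v: "v * (1 + c) = 1" and w: "w * c = 1"
  defines "Hy1 \<equiv> - p2 * ((c / 3 + y2\<^sup>2 * (c\<^sup>2 - s\<^sup>2)) * M - 2 * s * c * (s / 3 + y2\<^sup>2 * s * c)) * u\<^sup>2
                  + p2\<^sup>2 * 2 * s * c * (M + 2 * c\<^sup>2) * u ^ 3 / 18"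
    and "Hy2 \<equiv> p1 - p2 * 2 * y2 * s * c * u"
    and "Hp2 \<equiv> - (s / 3 + y2\<^sup>2 * s * c) * u - p2 * c\<^sup>2 * u\<^sup>2 / 9"
    and "m \<equiv> 1 - 2 * c * (1 - c) * u"
  shows "Hy1 * (2 * s * v + p2 / 2) + Hy2 * (y2 * m + p1 / 2) - 2 * p1 * y2 * v - p2 * Hp2 * m
           + p2 * y2\<^sup>2 * (2 * s * (2 * c - 1) * M - 4 * s * c\<^sup>2 * (1 - c)) * u\<^sup>2
         = (m - 2 * v) * (p1 * y2 - p2 * (s / 3 + y2\<^sup>2 * s * c) * u - p2\<^sup>2 * c\<^sup>2 * u\<^sup>2 / 18)
           + (m + (m - 2 * v) / 2 + 2 * s\<^sup>2 * (M + 2 * c\<^sup>2) * u * w * v) * (p2 * c * u / 3)\<^sup>2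
           + (p2 * Hy1 + p1 * Hy2) / 2"
proof -
  have P2: "- c * (M - 2 * s\<^sup>2) + (M - 2 * c * (1 - c)) * (1 + c) - M = 0"
    using sc by algebra
  have P3: "- (c\<^sup>2 - s\<^sup>2) * M + 2 * s\<^sup>2 * c\<^sup>2 + ((2 * c - 1) * M - 2 * c\<^sup>2 * (1 - c)) * (1 + c) - c * M = 0"
    using sc by algebra
  define E2 where "E2 =
    2/3 * s * u\<^sup>2 * v * (- c * (M - 2 * s\<^sup>2) + (M - 2 * c * (1 - c)) * (1 + c) - M)
    + 2/3 * s * (u * (1 - v * (1 + c)) + u * v * c * (1 - u * M) - 2 * c * (1 - c) * u\<^sup>2 * (1 - v * (1 + c)))"
  define E3 where "E3 =
    2 * s * u\<^sup>2 * v * (- (c\<^sup>2 - s\<^sup>2) * M + 2 * s\<^sup>2 * c\<^sup>2 + ((2 * c - 1) * M - 2 * c\<^sup>2 * (1 - c)) * (1 + c) - c * M)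
    - 2 * s * v * c * u * (1 - u * M)
    + (2 * s * (2 * c - 1) * M - 4 * s * c\<^sup>2 * (1 - c)) * u\<^sup>2 * (1 - v * (1 + c))"
  define E4 where "E4 = 2 * s\<^sup>2 * (M + 2 * c\<^sup>2) * u ^ 3 * v / 9 * c * (1 - w * c)"
  have "E2 = 0" "E3 = 0" "E4 = 0"
    using P2 P3 u v w by (simp_all add: E2_def E3_def E4_def)
  moreover have "Hy1 * (2 * s * v + p2 / 2) + Hy2 * (y2 * m + p1 / 2) - 2 * p1 * y2 * v - p2 * Hp2 * m
           + p2 * y2\<^sup>2 * (2 * s * (2 * c - 1) * M - 4 * s * c\<^sup>2 * (1 - c)) * u\<^sup>2
         - ((m - 2 * v) * (p1 * y2 - p2 * (s / 3 + y2\<^sup>2 * s * c) * u - p2\<^sup>2 * c\<^sup>2 * u\<^sup>2 / 18)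
           + (m + (m - 2 * v) / 2 + 2 * s\<^sup>2 * (M + 2 * c\<^sup>2) * u * w * v) * (p2 * c * u / 3)\<^sup>2
           + (p2 * Hy1 + p1 * Hy2) / 2)
      = p2 * E2 + p2 * y2\<^sup>2 * E3 + p2\<^sup>2 * E4"
    unfolding E2_def E3_def E4_def Hy1_def Hy2_def Hp2_def m_def
    by (simp add: field_simps power2_eq_square power3_eq_cube)
  ultimately show ?thesis by simp
qed

context
  fixes s c M u v w :: real
  assumes sc: "s\<^sup>2 + c\<^sup>2 = 1" and M: "3 * M = 3 * s\<^sup>2 + 1"
    and u: "u * M = 1" and v: "v * (1 + c) = 1" and w: "w * c = 1"
    and c0: "0 < c" and s: "\<bar>s\<bar> \<le> 1/10"
begin

lemma small_angle_bounds:
  shows "s\<^sup>2 \<le> 1/100" and "99/100 \<le> c" and "c \<le> 1" and "1/3 \<le> M" and "M \<le> 1/3 + 1/100"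
    and "300/103 \<le> u" and "u \<le> 3" and "0 \<le> v" and "v \<le> 100/199" and "0 \<le> w"
    and "0 \<le> c * (1 - c) * u" and "c * (1 - c) * u \<le> 3/100"
proof -
  show s2: "s\<^sup>2 \<le> 1/100"
    using power_mono[OF s, of 2] by (simp add: power2_abs power_divide)
  show c1: "c \<le> 1"
    using sc c0 by (metis abs_of_pos abs_square_le_1 le_add_same_cancel2 zero_le_power2)
  have "99/100 \<le> c\<^sup>2"
    using sc s2 by linarith
  also have "c\<^sup>2 \<le> c"
    using c0 c1 by (simp add: power2_eq_square mult_left_le)
  finally show c99: "99/100 \<le> c" .
  show M1: "1/3 \<le> M" and M2: "M \<le> 1/3 + 1/100"
    using M s2 zero_le_power2[of s] by linarith+
  have u_eq: "u = 1 / M"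
    using u M1 by (simp add: field_simps)
  show u1: "300/103 \<le> u" and u2: "u \<le> 3"
    using M1 M2 by (simp_all add: u_eq field_simps)
  have v_eq: "v = 1 / (1 + c)"
    using v c0 by (simp add: field_simps)
  show "0 \<le> v" and "v \<le> 100/199"
    using c0 c99 by (simp_all add: v_eq field_simps)
  have "w = 1 / c"
    using w c0 by (simp add: field_simps)
  with c0 show "0 \<le> w"
    by simp
  have "0 \<le> c * (1 - c)"
    using c0 c1 by simp
  moreover have "c * (1 - c) \<le> 1 * (1/100)"
    using c0 c1 c99 by (intro mult_mono) auto
  ultimately show "0 \<le> c * (1 - c) * u" and "c * (1 - c) * u \<le> 3/100"
    using mult_mono[of "c * (1 - c)" "1/100" u 3] u1 u2 by auto
qed

lemma chetaev_poly_abs_le: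
  fixes y2 p1 p2 :: real
  assumes y2: "\<bar>y2\<bar> \<le> 1/10" and p1: "\<bar>p1\<bar> \<le> 1/10" and p2: "\<bar>p2\<bar> \<le> 1/10"
  defines "Z \<equiv> - (p1 * (2 * s * v) + p2 * y2 * (1 - 2 * c * (1 - c) * u)) - p1 * p2 / 2"
  shows "3 * Z\<^sup>2 \<le> (p1\<^sup>2 + p2\<^sup>2) / 5" and "\<bar>Z\<bar> \<le> 1/25"
proof -
  note b = small_angle_bounds
  have "\<bar>s\<bar> * v \<le> 1/10 * (100/199)"
    using s b(8,9) by (intro mult_mono) auto
  then have "\<bar>2 * s * v\<bar> \<le> 11/100"
    using b(8) by (simp add: abs_mult mult.commute)
  then have a: "\<bar>p1 * (2 * s * v)\<bar> \<le> \<bar>p1\<bar> * (11/100)"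
    unfolding abs_mult[of p1] by (rule mult_left_mono) simp
  have "\<bar>1 - 2 * c * (1 - c) * u\<bar> \<le> 1"
    using b(11,12) by linarith
  then have "\<bar>y2 * (1 - 2 * c * (1 - c) * u)\<bar> \<le> 1/10"
    unfolding abs_mult using y2 mult_mono[of "\<bar>y2\<bar>" "1/10" _ 1] by auto
  then have m: "\<bar>p2 * y2 * (1 - 2 * c * (1 - c) * u)\<bar> \<le> \<bar>p2\<bar> * (1/10)"
    unfolding mult.assoc[of p2] abs_mult[of p2] by (rule mult_left_mono) simp
  have q: "\<bar>p1 * p2 / 2\<bar> \<le> \<bar>p1\<bar> * (1/20)"
    using mult_left_mono[OF p2, of "\<bar>p1\<bar>"] by (simp add: abs_mult)
  have "\<bar>Z\<bar> \<le> \<bar>p1\<bar> * (11/100) + \<bar>p2\<bar> * (1/10) + \<bar>p1\<bar> * (1/20)"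
    using a m q unfolding Z_def abs_le_iff by linarith
  then have Z: "\<bar>Z\<bar> \<le> 16/100 * (\<bar>p1\<bar> + \<bar>p2\<bar>)"
    using abs_ge_zero[of p2] by (simp add: field_simps)
  then show "\<bar>Z\<bar> \<le> 1/25"
    using p1 p2 by argo
  have "Z\<^sup>2 \<le> (16/100 * (\<bar>p1\<bar> + \<bar>p2\<bar>))\<^sup>2"
    using power_mono[OF Z abs_ge_zero, of 2] by simp
  also have "(\<bar>p1\<bar> + \<bar>p2\<bar>)\<^sup>2 \<le> 2 * (p1\<^sup>2 + p2\<^sup>2)"
    using sum_squares_ge_zero[of "\<bar>p1\<bar> - \<bar>p2\<bar>" 0] by (simp add: power2_eq_square algebra_simps)
  then have "(16/100 * (\<bar>p1\<bar> + \<bar>p2\<bar>))\<^sup>2 \<le> (16/100)\<^sup>2 * (2 * (p1\<^sup>2 + p2\<^sup>2))"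
    unfolding power_mult_distrib by (rule mult_left_mono) simp
  finally have "Z\<^sup>2 \<le> 512/10000 * (p1\<^sup>2 + p2\<^sup>2)"
    by (simp add: power_divide)
  then show "3 * Z\<^sup>2 \<le> (p1\<^sup>2 + p2\<^sup>2) / 5"
    using zero_le_power2[of p1] zero_le_power2[of p2] by argo
qed

lemma chetaev_weight_poly_ge:
  "828/1000 \<le> (1 - 2 * c * (1 - c) * u + (1 - 2 * c * (1 - c) * u - 2 * v) / 2
                 + 2 * s\<^sup>2 * (M + 2 * c\<^sup>2) * u * w * v) * (c * u / 3)\<^sup>2"
proof -
  note b = small_angle_bounds
  have "9/10 \<le> 1 - 2 * c * (1 - c) * u + (1 - 2 * c * (1 - c) * u - 2 * v) / 2"
    using b(9,11,12) by argo
  moreover have "0 \<le> 2 * s\<^sup>2 * (M + 2 * c\<^sup>2) * u * w * v"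
    using b(4,6,8,10) by simp
  ultimately have kappa: "9/10 \<le> 1 - 2 * c * (1 - c) * u + (1 - 2 * c * (1 - c) * u - 2 * v) / 2
                         + 2 * s\<^sup>2 * (M + 2 * c\<^sup>2) * u * w * v"
    by linarith
  have "96/100 \<le> c * u / 3"
    using mult_mono[OF b(2) b(6)] c0 by simp
  then have "(96/100)\<^sup>2 \<le> (c * u / 3)\<^sup>2"
    by (rule power_mono) simp
  from mult_mono[OF kappa this] kappa show ?thesis
    by (simp add: power_divide)
qed

lemma H_y1_poly_coefficient_bounds:
  fixes y2 p2 :: real
  assumes y2: "\<bar>y2\<bar> \<le> 1/10" and p2: "\<bar>p2\<bar> \<le> 1/10"
  shows "((c / 3 + y2\<^sup>2 * (c\<^sup>2 - s\<^sup>2)) * M - 2 * s * c * (s / 3 + y2\<^sup>2 * s * c)) * u\<^sup>2 \<le> 1062/1000"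
    and "\<bar>2 * s * c * (M + 2 * c\<^sup>2) * u ^ 3 * p2\<bar> \<le> 1296/1000"
proof -
  note b = small_angle_bounds
  have y22: "y2\<^sup>2 \<le> 1/100"
    using power_mono[OF y2, of 2] by (simp add: power2_abs power_divide)
  have "(c / 3 + y2\<^sup>2 * (c\<^sup>2 - s\<^sup>2)) * M \<le> (1/3 + 1/100) * (1/3 + 1/100)"
  proof (rule mult_mono)
    have "0 \<le> c\<^sup>2 - s\<^sup>2" "c\<^sup>2 - s\<^sup>2 \<le> 1"
      using sc b(1) zero_le_power2[of s] by linarith+
    then have "y2\<^sup>2 * (c\<^sup>2 - s\<^sup>2) \<le> 1/100 * 1"
      using y22 by (intro mult_mono) auto
    then show "c / 3 + y2\<^sup>2 * (c\<^sup>2 - s\<^sup>2) \<le> 1/3 + 1/100"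
      using b(3) by simp
  qed (use b(4,5) in auto)
  then have "(c / 3 + y2\<^sup>2 * (c\<^sup>2 - s\<^sup>2)) * M \<le> 10609/90000"
    by simp
  moreover have "2 * s * c * (s / 3 + y2\<^sup>2 * s * c) = 2 * c * s\<^sup>2 * (1/3 + y2\<^sup>2 * c)"
    by (simp add: power2_eq_square algebra_simps)
  then have "0 \<le> 2 * s * c * (s / 3 + y2\<^sup>2 * s * c)"
    using c0 by simp
  ultimately have "(c / 3 + y2\<^sup>2 * (c\<^sup>2 - s\<^sup>2)) * M - 2 * s * c * (s / 3 + y2\<^sup>2 * s * c) \<le> 118/1000"
    by linarith
  moreover have "u\<^sup>2 \<le> 9"
    using power_mono[OF b(7), of 2] b(6) by simp
  ultimately show "((c / 3 + y2\<^sup>2 * (c\<^sup>2 - s\<^sup>2)) * M - 2 * s * c * (s / 3 + y2\<^sup>2 * s * c)) * u\<^sup>2 \<le> 1062/1000"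
    using mult_mono[of _ "118/1000" "u\<^sup>2" 9] mult_nonpos_nonneg[of _ "u\<^sup>2"]
    by (cases "0 \<le> (c / 3 + y2\<^sup>2 * (c\<^sup>2 - s\<^sup>2)) * M - 2 * s * c * (s / 3 + y2\<^sup>2 * s * c)") auto
  have "\<bar>s\<bar> * \<bar>c\<bar> \<le> 1/10 * 1"
    using s b(3) c0 by (intro mult_mono) auto
  then have "\<bar>2 * s * c\<bar> \<le> 2/10 * 1"
    by (simp add: abs_mult)
  moreover have "\<bar>M + 2 * c\<^sup>2\<bar> \<le> 1/3 + 1/100 + 2"
    using b(3,4,5) c0 power_mono[OF b(3), of 2] by simp
  moreover have "\<bar>u ^ 3\<bar> \<le> 27"
    using power_mono[OF b(7), of 3] b(6) by simp
  ultimately have "\<bar>2 * s * c * (M + 2 * c\<^sup>2) * u ^ 3\<bar> \<le> 2/10 * (1/3 + 1/100 + 2) * 27"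
    unfolding abs_mult[of "2 * s * c * (M + 2 * c\<^sup>2)"] abs_mult[of "2 * s * c"]
    by (intro mult_mono) auto
  then have "\<bar>2 * s * c * (M + 2 * c\<^sup>2) * u ^ 3\<bar> * \<bar>p2\<bar> \<le> 2/10 * (1/3 + 1/100 + 2) * 27 * (1/10)"
    using p2 by (intro mult_mono) auto
  then show "\<bar>2 * s * c * (M + 2 * c\<^sup>2) * u ^ 3 * p2\<bar> \<le> 1296/1000"
    unfolding abs_mult[of _ p2] by simp
qed

lemma chetaev_quadratic_part_ge_poly:
  fixes y2 p1 p2 :: real
  assumes y2: "\<bar>y2\<bar> \<le> 1/10" and p1: "\<bar>p1\<bar> \<le> 1/10" and p2: "\<bar>p2\<bar> \<le> 1/10"
  defines "Hy1 \<equiv> - p2 * ((c / 3 + y2\<^sup>2 * (c\<^sup>2 - s\<^sup>2)) * M - 2 * s * c * (s / 3 + y2\<^sup>2 * s * c)) * u\<^sup>2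
                  + p2\<^sup>2 * 2 * s * c * (M + 2 * c\<^sup>2) * u ^ 3 / 18"
    and "Hy2 \<equiv> p1 - p2 * 2 * y2 * s * c * u"
    and "m \<equiv> 1 - 2 * c * (1 - c) * u"
  shows "(p1\<^sup>2 + p2\<^sup>2) / 5
    \<le> (m + (m - 2 * v) / 2 + 2 * s\<^sup>2 * (M + 2 * c\<^sup>2) * u * w * v) * (p2 * c * u / 3)\<^sup>2
       + (p2 * Hy1 + p1 * Hy2) / 2"
proof -
  define K0 K1 K2 K3 where
    "K0 = (m + (m - 2 * v) / 2 + 2 * s\<^sup>2 * (M + 2 * c\<^sup>2) * u * w * v) * (c * u / 3)\<^sup>2"
    and "K1 = ((c / 3 + y2\<^sup>2 * (c\<^sup>2 - s\<^sup>2)) * M - 2 * s * c * (s / 3 + y2\<^sup>2 * s * c)) * u\<^sup>2"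
    and "K2 = 2 * s * c * (M + 2 * c\<^sup>2) * u ^ 3 * p2"
    and "K3 = y2 * s * c * u"
  note k = H_y1_poly_coefficient_bounds[OF y2 p2, folded K1_def K2_def]
  have K2: "- K2 \<le> 1296/1000"
    using k(2) by linarith
  have "\<bar>K3\<bar> \<le> 1/10 * (1/10) * (1 * 3)"
    unfolding K3_def abs_mult mult.assoc[symmetric]
    using y2 s small_angle_bounds(3,6,7) c0 by (intro mult_mono) auto
  moreover have "\<bar>p1 * p2\<bar> \<le> (p1\<^sup>2 + p2\<^sup>2) / 2"
    using sum_squares_ge_zero[of "\<bar>p1\<bar> - \<bar>p2\<bar>" 0]
    by (simp add: abs_mult power2_eq_square algebra_simps)
  ultimately have "\<bar>K3\<bar> * \<bar>p1 * p2\<bar> \<le> 3/100 * ((p1\<^sup>2 + p2\<^sup>2) / 2)"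
    by (intro mult_mono) auto
  moreover have "K3 * (p1 * p2) \<le> \<bar>K3\<bar> * \<bar>p1 * p2\<bar>"
    unfolding abs_mult[symmetric] by (rule abs_ge_self)
  ultimately have K3: "K3 * (p1 * p2) \<le> 3/100 * ((p1\<^sup>2 + p2\<^sup>2) / 2)"
    by linarith
  have "(m + (m - 2 * v) / 2 + 2 * s\<^sup>2 * (M + 2 * c\<^sup>2) * u * w * v) * (p2 * c * u / 3)\<^sup>2
       + (p2 * Hy1 + p1 * Hy2) / 2
      = K0 * p2\<^sup>2 - K1 * p2\<^sup>2 / 2 + K2 * p2\<^sup>2 / 36 + p1\<^sup>2 / 2 - K3 * (p1 * p2)"
    unfolding K0_def K1_def K2_def K3_def Hy1_def Hy2_def
    by (simp add: field_simps power2_eq_square power3_eq_cube)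
  moreover have "828/1000 * p2\<^sup>2 \<le> K0 * p2\<^sup>2"
    using chetaev_weight_poly_ge unfolding K0_def m_def by (rule mult_right_mono) simp
  moreover have "K1 * p2\<^sup>2 \<le> 1062/1000 * p2\<^sup>2"
    using k(1) by (rule mult_right_mono) simp
  moreover have "- (1296/1000 * p2\<^sup>2) \<le> K2 * p2\<^sup>2"
    using mult_right_mono[OF K2, of "p2\<^sup>2"] by simp
  ultimately show ?thesis
    using K3 zero_le_power2[of p1] zero_le_power2[of p2] by argo
qed

lemma chetaev_rate_ge_poly:
  fixes y2 p1 p2 :: real
  assumes y2: "\<bar>y2\<bar> \<le> 1/10" and p1: "\<bar>p1\<bar> \<le> 1/10" and p2: "\<bar>p2\<bar> \<le> 1/10"
    and H0: "p1 * y2 - p2 * (s / 3 + y2\<^sup>2 * s * c) * u - p2\<^sup>2 * c\<^sup>2 * u\<^sup>2 / 18 = 0"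
  defines "Hy1 \<equiv> - p2 * ((c / 3 + y2\<^sup>2 * (c\<^sup>2 - s\<^sup>2)) * M - 2 * s * c * (s / 3 + y2\<^sup>2 * s * c)) * u\<^sup>2
                  + p2\<^sup>2 * 2 * s * c * (M + 2 * c\<^sup>2) * u ^ 3 / 18"
    and "Hy2 \<equiv> p1 - p2 * 2 * y2 * s * c * u"
    and "Hp2 \<equiv> - (s / 3 + y2\<^sup>2 * s * c) * u - p2 * c\<^sup>2 * u\<^sup>2 / 9"
    and "m \<equiv> 1 - 2 * c * (1 - c) * u"
    and "Z \<equiv> - (p1 * (2 * s * v) + p2 * y2 * (1 - 2 * c * (1 - c) * u)) - p1 * p2 / 2"
  shows "3 * Z\<^sup>2 \<le> Hy1 * (2 * s * v + p2 / 2) + Hy2 * (y2 * m + p1 / 2) - 2 * p1 * y2 * v - p2 * Hp2 * m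
           + p2 * y2\<^sup>2 * (2 * s * (2 * c - 1) * M - 4 * s * c\<^sup>2 * (1 - c)) * u\<^sup>2"
    and "\<bar>Z\<bar> \<le> 1/25"
proof -
  have Z: "3 * Z\<^sup>2 \<le> (p1\<^sup>2 + p2\<^sup>2) / 5" "\<bar>Z\<bar> \<le> 1/25"
    using chetaev_poly_abs_le[OF y2 p1 p2] by (simp_all add: Z_def)
  then show "\<bar>Z\<bar> \<le> 1/25"
    by simp
  note Z(1)
  also have "(p1\<^sup>2 + p2\<^sup>2) / 5
    \<le> (m + (m - 2 * v) / 2 + 2 * s\<^sup>2 * (M + 2 * c\<^sup>2) * u * w * v) * (p2 * c * u / 3)\<^sup>2
       + (p2 * Hy1 + p1 * Hy2) / 2"
    using chetaev_quadratic_part_ge_poly[OF y2 p1 p2] by (simp add: Hy1_def Hy2_def m_def)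
  also have "\<dots> = Hy1 * (2 * s * v + p2 / 2) + Hy2 * (y2 * m + p1 / 2) - 2 * p1 * y2 * v - p2 * Hp2 * m
           + p2 * y2\<^sup>2 * (2 * s * (2 * c - 1) * M - 4 * s * c\<^sup>2 * (1 - c)) * u\<^sup>2"
    using chetaev_identity_poly[OF sc M u v w, of p2 y2 p1] H0 by (simp add: Hy1_def Hy2_def Hp2_def m_def)
  finally show "3 * Z\<^sup>2 \<le> Hy1 * (2 * s * v + p2 / 2) + Hy2 * (y2 * m + p1 / 2) - 2 * p1 * y2 * v
      - p2 * Hp2 * m + p2 * y2\<^sup>2 * (2 * s * (2 * c - 1) * M - 4 * s * c\<^sup>2 * (1 - c)) * u\<^sup>2" .
qed

end

lemma cos_pos_of_cube:
  assumes "z \<in> cube (1/10)"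
  shows "0 < cos (fst z)"
  using assms pi_gt3 unfolding cube_def by (intro cos_gt_zero_pi) auto

lemma chetaev_rate_ge:
  assumes "z \<in> cube (1/10)" and "hamiltonian z = 0"
  shows "3 * (chetaev z)\<^sup>2 \<le> chetaev_rate z" and "\<bar>chetaev z\<bar> \<le> 1/25"
proof -
  obtain y1 y2 p1 p2 where z: "z = (y1, y2, p1, p2)"
    by (cases z) auto
  have y1: "\<bar>y1\<bar> \<le> 1/10" and y2: "\<bar>y2\<bar> \<le> 1/10" and p1: "\<bar>p1\<bar> \<le> 1/10" and p2: "\<bar>p2\<bar> \<le> 1/10"
    using assms(1) by (simp_all add: z cube_def)
  define s c M where "s = sin y1" and "c = cos y1" and "M = den y1"
  define u v w where "u = inverse M" and "v = inverse (1 + c)" and "w = inverse c"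
  have c0: "0 < c"
    using cos_pos_of_cube[OF assms(1)] by (simp add: z c_def)
  have s: "\<bar>s\<bar> \<le> 1/10"
    unfolding s_def using abs_sin_x_le_abs_x[of y1] y1 by linarith
  have nonzero: "1 + c \<noteq> 0" "c \<noteq> 0" "M \<noteq> 0"
    using c0 by (auto simp: M_def)
  then have uvw: "u * M = 1" "v * (1 + c) = 1" "w * c = 1"
    by (simp_all add: u_def v_def w_def)
  have divs: "x / M = x * u" "x / M\<^sup>2 = x * u\<^sup>2" "x / (18 * M ^ 3) = x * u ^ 3 / 18"
    "x / (9 * M\<^sup>2) = x * u\<^sup>2 / 9" "x / (18 * M\<^sup>2) = x * u\<^sup>2 / 18" "x / (1 + c) = x * v" for x
    using nonzero by (simp_all add: u_def v_def field_simps)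
  have sc: "s\<^sup>2 + c\<^sup>2 = 1" and "3 * M = 3 * s\<^sup>2 + 1"
    by (simp_all add: s_def c_def M_def den_def)
  note poly = chetaev_rate_ge_poly[OF this uvw c0 s y2 p1 p2]
  have "p1 * y2 - p2 * (s / 3 + y2\<^sup>2 * s * c) * u - p2\<^sup>2 * c\<^sup>2 * u\<^sup>2 / 18 = 0"
    using assms(2) unfolding z hamiltonian_def H_eq prod.case s_def[symmetric] c_def[symmetric]
      M_def[symmetric] by (simp only: divs)
  from poly[OF this] show "3 * (chetaev z)\<^sup>2 \<le> chetaev_rate z" and "\<bar>chetaev z\<bar> \<le> 1/25"
    unfolding z chetaev_rate_def chetaev_def chetaev_a_def chetaev_m_def H_y1_def H_y2_def H_p2_def
      prod.case s_def[symmetric] c_def[symmetric] M_def[symmetric]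
    by (simp_all only: divs)
qed

section \<open>Instability\<close>

lemma increment_ge_of_derivative_ge:
  fixes f f' :: "real \<Rightarrow> real"
  assumes "a \<le> b"
    and deriv: "\<And>t. t \<in> {a..b} \<Longrightarrow> (f has_real_derivative f' t) (at t within {a..b})"
    and bound: "\<And>t. t \<in> {a..b} \<Longrightarrow> k \<le> f' t"
  shows "k * (b - a) \<le> f b - f a"
proof -
  define g where "g t = f t - k * t" for t
  have "continuous_on {a..b} f"
    using deriv DERIV_continuous continuous_on_eq_continuous_within by blast
  then have "continuous_on {a..b} g"
    unfolding g_def by (intro continuous_intros)
  moreover have "\<exists>y. (g has_real_derivative y) (at t) \<and> 0 \<le> y" if "a < t" "t < b" for t
  proof -
    have "(f has_real_derivative f' t) (at t)"
      using deriv[of t] that at_within_Icc_at[of a t b] by simp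
    then have "(g has_real_derivative f' t - k) (at t)"
      unfolding g_def[abs_def] by (auto intro!: derivative_eq_intros)
    then show ?thesis
      using bound[of t] that by auto
  qed
  ultimately have "g a \<le> g b"
    using DERIV_nonneg_imp_increasing_open[OF assms(1)] by blast
  then show ?thesis
    by (simp add: g_def algebra_simps)
qed

lemma hamiltonian_constant:
  assumes "ham_solution x T" and "t \<in> {0..T}"
  shows "hamiltonian (x t) = hamiltonian (x 0)"
proof -
  have "\<exists>C. \<forall>s\<in>{0..T}. hamiltonian (x s) = C"
    using assms(1) unfolding ham_solution_def
    by (intro has_field_derivative_zero_constant hamiltonian_has_derivative_zero) auto
  then show ?thesis
    using assms(2) by fastforce
qed

lemma time_in_cube_le:
  assumes sol: "ham_solution x T" and "0 \<le> T"
    and cube: "\<And>t. t \<in> {0..T} \<Longrightarrow> x t \<in> cube (1/10)"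
    and "hamiltonian (x 0) = 0" and pos: "0 < chetaev (x 0)"
  shows "3 * (chetaev (x 0))\<^sup>2 * T \<le> 2/25"
proof -
  have rate: "3 * (chetaev (x t))\<^sup>2 \<le> chetaev_rate (x t)" and bounded: "\<bar>chetaev (x t)\<bar> \<le> 1/25"
    if "t \<in> {0..T}" for t
    using chetaev_rate_ge[OF cube[OF that]] hamiltonian_constant[OF sol that] assms(4) by auto
  have deriv: "((\<lambda>t. chetaev (x t)) has_real_derivative chetaev_rate (x t)) (at t within {0..T})"
    if "t \<in> {0..T}" for t
    using sol that cos_pos_of_cube[OF cube[OF that]] unfolding ham_solution_def
    by (blast intro: chetaev_has_derivative)
  have increasing: "chetaev (x 0) \<le> chetaev (x t)" if t: "t \<in> {0..T}" for t
  proof -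
    have "0 * (t - 0) \<le> chetaev (x t) - chetaev (x 0)"
    proof (rule increment_ge_of_derivative_ge)
      fix s assume s: "s \<in> {0..t}"
      with t show "((\<lambda>t. chetaev (x t)) has_real_derivative chetaev_rate (x s)) (at s within {0..t})"
        by (intro has_field_derivative_subset[OF deriv]) auto
      have "s \<in> {0..T}"
        using s t by auto
      from rate[OF this] show "0 \<le> chetaev_rate (x s)"
        using zero_le_power2[of "chetaev (x s)"] by linarith
    qed (use t in auto)
    then show ?thesis
      by simp
  qed
  have "3 * (chetaev (x 0))\<^sup>2 * (T - 0) \<le> chetaev (x T) - chetaev (x 0)"
  proof (rule increment_ge_of_derivative_ge[OF \<open>0 \<le> T\<close> deriv])
    fix t assume t: "t \<in> {0..T}"
    have "(chetaev (x 0))\<^sup>2 \<le> (chetaev (x t))\<^sup>2"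
      using pos increasing[OF t] by (intro power_mono) auto
    then show "3 * (chetaev (x 0))\<^sup>2 \<le> chetaev_rate (x t)"
      using rate[OF t] by linarith
  qed
  then show ?thesis
    using bounded[of 0] bounded[of T] \<open>0 \<le> T\<close> by (simp add: abs_le_iff)
qed

lemma first_exit_time:
  fixes x :: "real \<Rightarrow> 'a::topological_space"
  assumes cont: "continuous_on {0..T} x" and "open U" and "closed K" and "U \<subseteq> K"
    and "x 0 \<in> U" and "t1 \<in> {0..T}" and "x t1 \<notin> U"
  obtains ts where "ts \<in> {0..T}" and "x ts \<notin> U" and "\<And>s. s \<in> {0..ts} \<Longrightarrow> x s \<in> K"
proof -
  define S where "S = {0..T} \<inter> x -` (- U)"
  have "closed S"
    unfolding S_def using continuous_closed_preimage[OF cont closed_atLeastAtMost, of "- U"] \<open>open U\<close>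
    by (simp add: closed_Compl)
  moreover have "S \<noteq> {}" and "bdd_below S"
    using assms(6,7) unfolding S_def by (auto intro: bdd_belowI[of _ 0])
  ultimately have ts: "Inf S \<in> S"
    by (rule closed_contains_Inf[rotated -1])
  then have "0 \<le> Inf S" and "x (Inf S) \<notin> U"
    unfolding S_def by auto
  with \<open>x 0 \<in> U\<close> have "0 < Inf S"
    by (cases "Inf S = 0") auto
  have before: "x s \<in> U" if "0 \<le> s" "s < Inf S" for s
    using that ts cInf_lower[OF _ \<open>bdd_below S\<close>, of s] unfolding S_def by force
  have "closed ({0..Inf S} \<inter> x -` K)"
    using ts unfolding S_def
    by (intro continuous_closed_preimage[OF continuous_on_subset[OF cont] closed_atLeastAtMost \<open>closed K\<close>]) auto
  moreover have "{0..<Inf S} \<subseteq> {0..Inf S} \<inter> x -` K"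
    using before \<open>U \<subseteq> K\<close> by fastforce
  ultimately have "closure {0..<Inf S} \<subseteq> {0..Inf S} \<inter> x -` K"
    by (rule closure_minimal[rotated])
  then have "\<And>s. s \<in> {0..Inf S} \<Longrightarrow> x s \<in> K"
    using \<open>0 < Inf S\<close> by (auto simp: closure_atLeastLessThan)
  with ts show ?thesis
    using that unfolding S_def by blast
qed

lemma solution_leaves_open_cube:
  assumes "z0 \<in> open_cube (1/10)" and "hamiltonian z0 = 0" and "0 < chetaev z0"
  shows "\<exists>x T. T \<ge> 0 \<and> x 0 = z0 \<and> ham_solution x T \<and> x T \<notin> open_cube (1/10)"
proof -
  define T where "T = 1 / (chetaev z0)\<^sup>2"
  have "0 \<le> T"
    by (simp add: T_def)
  obtain L where "L-lipschitz_on UNIV (\<lambda>z. ham_field (cube_retract (1/10) z))"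
    using lipschitz_ham_field_cube_retract by blast
  then obtain x where "x 0 = z0"
    and deriv: "\<And>t. t \<in> {0..T} \<Longrightarrow>
      (x has_vector_derivative ham_field (cube_retract (1/10) (x t))) (at t within {0..T})"
    using lipschitz_ode_solution_exists[OF _ \<open>0 \<le> T\<close>, of L _ z0] by blast
  have solution: "ham_solution x t"
    if "t \<in> {0..T}" and "\<And>s. s \<in> {0..t} \<Longrightarrow> x s \<in> cube (1/10)" for t
    unfolding ham_solution_def
  proof
    fix s assume s: "s \<in> {0..t}"
    have "(x has_vector_derivative ham_field (cube_retract (1/10) (x s))) (at s within {0..t})"
      using that(1) s by (intro has_vector_derivative_within_subset[OF deriv]) auto
    then show "(x has_vector_derivative ham_field (x s)) (at s within {0..t})"
      using cube_retract_id[OF that(2)[OF s]] by simp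
  qed
  have "\<exists>t1\<in>{0..T}. x t1 \<notin> open_cube (1/10)"
  proof (rule ccontr)
    assume "\<not> ?thesis"
    then have cube: "x t \<in> cube (1/10)" if "t \<in> {0..T}" for t
      using that open_cube_subset_cube by blast
    have "3 * (chetaev z0)\<^sup>2 * T \<le> 2/25"
      using time_in_cube_le[OF solution[OF _ cube] \<open>0 \<le> T\<close> cube] assms(2,3) \<open>x 0 = z0\<close>
      \<open>0 \<le> T\<close> by auto
    then show False
      using assms(3) by (simp add: T_def)
  qed
  then obtain t1 where "t1 \<in> {0..T}" and "x t1 \<notin> open_cube (1/10)"
    by blast
  moreover have "continuous_on {0..T} x"
    using deriv has_vector_derivative_continuous continuous_on_eq_continuous_within by blast
  moreover have "x 0 \<in> open_cube (1/10)"
    using assms(1) \<open>x 0 = z0\<close> by simp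
  ultimately obtain ts where "ts \<in> {0..T}" "x ts \<notin> open_cube (1/10)"
    and "\<And>s. s \<in> {0..ts} \<Longrightarrow> x s \<in> cube (1/10)"
    using first_exit_time[OF _ open_open_cube closed_cube open_cube_subset_cube] by blast
  then show ?thesis
    using solution \<open>x 0 = z0\<close> by auto
qed

lemma chetaev_pos:
  assumes "0 < d" and "d \<le> 1/10"
  shows "0 < chetaev (- d, 0, d, 0)"
proof -
  have "0 < sin d" and "0 < cos d"
    using assms pi_gt3 by (auto intro: sin_gt_zero cos_gt_zero_pi)
  then show ?thesis
    using assms by (simp add: chetaev_def chetaev_a_def add_pos_pos)
qed

theorem mainTheorem1:
  shows "\<exists>U::(real \<times> real \<times> real \<times> real) set. open U \<and> 0 \<in> U \<and>
           (\<forall>W. open W \<and> 0 \<in> W \<longrightarrow>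
              (\<exists>x T. T \<ge> 0 \<and> x 0 \<in> W \<and> ham_solution x T \<and> x T \<notin> U))"
proof (rule exI[of _ "open_cube (1/10)"], intro conjI allI impI)
  show "open (open_cube (1/10))"
    by (rule open_open_cube)
  show "0 \<in> open_cube (1/10)"
    by (simp add: open_cube_def)
  fix W :: "state set"
  assume "open W \<and> 0 \<in> W"
  then obtain e where "0 < e" and "ball 0 e \<subseteq> W"
    by (meson openE)
  define d where "d = min (e/3) (1/20)"
  define z0 :: state where "z0 = (- d, 0, d, 0)"
  have d: "0 < d" "d \<le> 1/20" "d \<le> e/3"
    using \<open>0 < e\<close> by (simp_all add: d_def)
  have "norm z0 \<le> d + d"
    using norm_Pair_le[of "- d" "(0::real, d, 0::real)"] norm_Pair_le[of "0::real" "(d, 0::real)"]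
      norm_Pair_le[of d "0::real"] d(1) by (simp add: z0_def)
  then have "z0 \<in> W"
    using \<open>ball 0 e \<subseteq> W\<close> d by auto
  have "\<exists>x T. T \<ge> 0 \<and> x 0 = z0 \<and> ham_solution x T \<and> x T \<notin> open_cube (1/10)"
    by (rule solution_leaves_open_cube)
      (use d chetaev_pos[of d] in \<open>simp_all add: z0_def open_cube_def hamiltonian_def H_def\<close>)
  with \<open>z0 \<in> W\<close> show "\<exists>x T. T \<ge> 0 \<and> x 0 \<in> W \<and> ham_solution x T \<and> x T \<notin> open_cube (1/10)"
    by auto
qed

end
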